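(* Let $k\ge1$ be odd, $\omega=\frac{-1+\sqrt{-3}}{2}$, and with $S,T,T_\omega=\begin{psmallmatrix}1&\omega\\0&1\end{psmallmatrix},L=\begin{psmallmatrix}\omega^2&0\\0&\omega\end{psmallmatrix},U=TS,E=T_\omega SL$ let $W_{k,k}=\ker(\mathbf{1}+S)\cap\ker(\mathbf{1}-L)\cap\ker(\mathbf{1}+U+U^2)\cap\ker(\mathbf{1}+E+E^2)$. Let $\zeta=e^{\pi i/3}$ and $\varepsilon_3=\begin{psmallmatrix}\zeta&0\\0&1\end{psmallmatrix}$, so $P|\varepsilon_3=P(\zeta z,\bar\zeta\bar z)$. Then $W_{k,k}|\varepsilon_3=W_{k,k}$, and hence $$W_{k,k}=\bigoplus_{j=1}^{6}W_{k,k}^{\zeta^j},\qquad W_{k,k}^{\zeta^j}=W_{k,k}\cap\{P\in V_{k,k}:P(\zeta z,\bar\zeta\bar z)=\zeta^jP(z,\bar z)\}.$$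
   Context: $S=\begin{psmallmatrix}0&-1\\1&0\end{psmallmatrix}$, $T=\begin{psmallmatrix}1&1\\0&1\end{psmallmatrix}$. $V_{k,k}$: polynomials $\sum_{0\le i,j\le k}c_{ij}z^i\bar z^j$ over $\mathbb{C}$ with right action $(P|\gamma)(z,\bar z)=(cz+e)^k\overline{(cz+e)}^kP\!\left(\frac{az+b}{cz+e},\frac{\bar a\bar z+\bar b}{\bar c\bar z+\bar e}\right)$ for $\gamma=\begin{psmallmatrix}a&b\\c&e\end{psmallmatrix}$, extended linearly; $\ker(X)=\{P:P|X=0\}$; $W|\varepsilon_3=\{P|\varepsilon_3:P\in W\}$. *)

theory Defs
  imports "HOL-Analysis.Analysis"
begin

definition mat2 :: "complex \<Rightarrow> complex \<Rightarrow> complex \<Rightarrow> complex \<Rightarrow> complex^2^2" where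
  "mat2 a b c e = (\<chi> i j. if i = 1 then (if j = 1 then a else b) else (if j = 1 then c else e))"

text \<open>An element of V_{k,k} is given by its coefficient array c i j (coefficient of z^i zbar^j),
  vanishing outside 0..k x 0..k.\<close>

definition Vkk :: "nat \<Rightarrow> (nat \<Rightarrow> nat \<Rightarrow> complex) set" where
  "Vkk k = {c. \<forall>i j. (k < i \<or> k < j) \<longrightarrow> c i j = 0}"

definition evalP :: "nat \<Rightarrow> (nat \<Rightarrow> nat \<Rightarrow> complex) \<Rightarrow> complex \<Rightarrow> complex" where
  "evalP k c z = (\<Sum>i\<le>k. \<Sum>j\<le>k. c i j * z ^ i * cnj z ^ j)"

text \<open>The slash action P|gamma, written out as the polynomial
  (cz+e)^k conj(cz+e)^k P((az+b)/(cz+e), conj((az+b)/(cz+e)))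
  = sum c_ij (az+b)^i (cz+e)^(k-i) (conj a zbar + conj b)^j (conj c zbar + conj e)^(k-j),
  evaluated at z (with zbar = cnj z).\<close>

definition slash :: "nat \<Rightarrow> complex^2^2 \<Rightarrow> (nat \<Rightarrow> nat \<Rightarrow> complex) \<Rightarrow> complex \<Rightarrow> complex" where
  "slash k g P z =
     (let a = g$1$1; b = g$1$2; c = g$2$1; e = g$2$2 in
      (\<Sum>i\<le>k. \<Sum>j\<le>k. P i j * (a * z + b) ^ i * (c * z + e) ^ (k - i)
                       * (cnj a * cnj z + cnj b) ^ j * (cnj c * cnj z + cnj e) ^ (k - j)))"

definition Smat :: "complex^2^2" where "Smat = mat2 0 (-1) 1 0"
definition Tmat :: "complex^2^2" where "Tmat = mat2 1 1 0 1"
definition omega :: complex where "omega = (-1 + \<i> * complex_of_real (sqrt 3)) / 2"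
definition Tomega :: "complex^2^2" where "Tomega = mat2 1 omega 0 1"
definition Lmat :: "complex^2^2" where "Lmat = mat2 (omega^2) 0 0 omega"
definition Umat :: "complex^2^2" where "Umat = Tmat ** Smat"
definition Emat :: "complex^2^2" where "Emat = Tomega ** Smat ** Lmat"
definition zeta :: complex where "zeta = exp (complex_of_real pi * \<i> / 3)"
definition eps3 :: "complex^2^2" where "eps3 = mat2 zeta 0 0 1"

definition Wkk :: "nat \<Rightarrow> (nat \<Rightarrow> nat \<Rightarrow> complex) set" where
  "Wkk k = {P \<in> Vkk k.
      (\<forall>z. slash k (mat 1) P z + slash k Smat P z = 0) \<and>
      (\<forall>z. slash k (mat 1) P z - slash k Lmat P z = 0) \<and>
      (\<forall>z. slash k (mat 1) P z + slash k Umat P z + slash k (Umat ** Umat) P z = 0) \<and>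
      (\<forall>z. slash k (mat 1) P z + slash k Emat P z + slash k (Emat ** Emat) P z = 0)}"

definition Weig :: "nat \<Rightarrow> complex \<Rightarrow> (nat \<Rightarrow> nat \<Rightarrow> complex) set" where
  "Weig k lam = {P \<in> Wkk k. \<forall>z. evalP k P (zeta * z) = lam * evalP k P z}"

end

theory Submission
  imports Defs "HOL-Computational_Algebra.Polynomial"
begin

(* The slash action of g on P is the substitution u \<mapsto> g u in the (k,k)-bihomogeneous form on
   C^2 that restricts to P on the chart (z : 1). The defining relations of W_{k,k} are imposed on
   that chart only, but they extend to all of C^2 by homogeneity and continuity, where they read
   F o S = -F, F o L = F and F + F o U + F o U^2 = 0; the E-relation is the L-conjugate of the
   U-relation because E = L U L^-1. Conjugation by eps3 permutes these relations:
   eps3 S = L S^3 eps3, eps3 L = L eps3, eps3 U = L^2 S U^2 S L eps3 and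
   eps3 U^2 = L^2 S U S L eps3. Hence W_{k,k} is eps3-stable. As eps3 multiplies z^i zbar^j by
   zeta^(i-j), the zeta^m-eigencomponent of P is the part of P supported on i - j = m (mod 6),
   which is the average (1/6) sum_n zeta^(-mn) P|eps3^n and therefore again lies in W_{k,k}. *)

section \<open>Polynomials in z and zbar\<close>

lemma poly_eq_0_if_vanishes_on_reals:
  fixes p :: "complex poly"
  assumes "\<And>x::real. poly p (of_real x) = 0"
  shows "p = 0"
proof (rule ccontr)
  assume "p \<noteq> 0"
  then have "finite {x. poly p x = 0}"
    by (rule poly_roots_finite)
  moreover have "range complex_of_real \<subseteq> {x. poly p x = 0}"
    using assms by auto
  ultimately have "finite (range complex_of_real)"
    by (rule finite_subset[rotated])
  then show False
    using finite_imageD[OF _ inj_of_real] infinite_UNIV_char_0[where 'a=real] by blast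
qed

lemma poly_sum_smult_linear_powers:
  "poly (\<Sum>i\<le>k. \<Sum>j\<le>k. smult (c i j) ([:a, b:] ^ i * [:a', b':] ^ j)) x
   = (\<Sum>i\<le>k. \<Sum>j\<le>k. c i j * (a + x * b) ^ i * (a' + x * b') ^ j)"
  by (simp add: poly_sum mult.assoc)

lemma evalP_eq_0_imp_coeff_eq_0:
  assumes zero: "\<And>z. evalP k c z = 0" and "i \<le> k" "j \<le> k"
  shows "c i j = 0"
proof -
  define F where "F z w = (\<Sum>i\<le>k. \<Sum>j\<le>k. c i j * z ^ i * w ^ j)" for z w
  \<comment> \<open>Writing \<open>z = x + \<i> y\<close>, the variables \<open>x\<close> and \<open>y\<close> can be made complex one at a time.\<close>
  have on_reals: "F (of_real x + \<i> * of_real y) (of_real x - \<i> * of_real y) = 0" for x y :: real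
    using zero[of "of_real x + \<i> * of_real y"] by (simp add: F_def evalP_def)
  have on_real_y: "F (x + \<i> * of_real y) (x - \<i> * of_real y) = 0" for x and y :: real
  proof -
    define p where
      "p = (\<Sum>i\<le>k. \<Sum>j\<le>k. smult (c i j) ([:\<i> * of_real y, 1:] ^ i * [:- \<i> * of_real y, 1:] ^ j))"
    have p: "poly p x = F (x + \<i> * of_real y) (x - \<i> * of_real y)" for x
      unfolding p_def poly_sum_smult_linear_powers F_def by (simp add: algebra_simps)
    have "p = 0"
      by (rule poly_eq_0_if_vanishes_on_reals) (simp add: p on_reals)
    then show ?thesis
      using p by simp
  qed
  have on_pairs: "F (x + \<i> * y) (x - \<i> * y) = 0" for x y
  proof -
    define q where "q = (\<Sum>i\<le>k. \<Sum>j\<le>k. smult (c i j) ([:x, \<i>:] ^ i * [:x, - \<i>:] ^ j))"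
    have q: "poly q y = F (x + \<i> * y) (x - \<i> * y)" for y
      unfolding q_def poly_sum_smult_linear_powers F_def by (simp add: algebra_simps)
    have "q = 0"
      by (rule poly_eq_0_if_vanishes_on_reals) (simp add: q on_real_y)
    then show ?thesis
      using q by simp
  qed
  have F_zero: "F z w = 0" for z w
    using on_pairs[of "(z + w) / 2" "(z - w) / (2 * \<i>)"] by (simp add: field_simps)
  have row_zero: "(\<Sum>j\<le>k. c i j * w ^ j) = 0" for w
  proof (rule zero_polynom_imp_zero_coeffs[of "\<lambda>i. \<Sum>j\<le>k. c i j * w ^ j" k i])
    show "(\<Sum>i\<le>k. (\<Sum>j\<le>k. c i j * w ^ j) * z ^ i) = 0" for z
      using F_zero[of z w] by (simp add: F_def sum_distrib_left sum_distrib_right mult_ac)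
  qed fact
  show ?thesis
    using zero_polynom_imp_zero_coeffs[of "c i" k j] row_zero \<open>j \<le> k\<close> by blast
qed

lemma zeta_eq: "zeta = (1 + \<i> * sqrt 3) / 2"
proof -
  have "zeta = cis (pi / 3)"
    by (simp add: zeta_def cis_conv_exp mult_ac)
  then show ?thesis
    by (simp add: complex_eq_iff cos_60 sin_60)
qed

lemma zeta_sq: "zeta\<^sup>2 = zeta - 1"
  by (simp add: zeta_eq complex_eq_iff power2_eq_square field_simps)

lemma omega_eq: "omega = zeta - 1"
  by (simp add: zeta_eq omega_def complex_eq_iff field_simps)

lemma cnj_zeta_pow: "cnj zeta ^ n = zeta ^ (5 * n)"
proof -
  have "zeta ^ 5 = 1 - zeta"
    using zeta_sq by algebra
  moreover have "cnj zeta = 1 - zeta"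
    by (simp add: zeta_eq complex_eq_iff field_simps)
  ultimately show ?thesis
    by (simp add: power_mult)
qed

lemma zeta_pow_eq_1_iff: "zeta ^ n = 1 \<longleftrightarrow> 6 dvd n"
proof -
  have "zeta ^ n = exp (of_nat n * (pi * \<i> / 3))"
    unfolding zeta_def exp_of_nat_mult ..
  also have "\<dots> = 1 \<longleftrightarrow> (\<exists>m::int. real n * pi / 3 = of_int (2 * m) * pi)"
    by (simp add: exp_eq_1)
  also have "\<dots> \<longleftrightarrow> (\<exists>m::int. int n = 6 * m)"
  proof -
    have "real n * pi / 3 = of_int (2 * m) * pi \<longleftrightarrow> of_int (int n) = (of_int (6 * m) :: real)"
      for m :: int
      by (auto simp: field_simps)
    then show ?thesis
      by (simp only: of_int_eq_iff)
  qed
  also have "\<dots> \<longleftrightarrow> 6 dvd n"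
    by (metis dvd_def int_dvd_int_iff of_nat_numeral)
  finally show ?thesis .
qed

lemma zeta_pow_6_mult: "zeta ^ (6 * n) = 1"
  by (simp add: zeta_pow_eq_1_iff)

lemma zeta_pow_eq_iff: "zeta ^ a = zeta ^ b \<longleftrightarrow> a mod 6 = b mod 6"
proof -
  have *: "zeta ^ a = zeta ^ b \<longleftrightarrow> a mod 6 = b mod 6" if "a \<le> b" for a b
  proof -
    have "zeta ^ b = zeta ^ a * zeta ^ (b - a)"
      using that by (simp flip: power_add)
    then have "zeta ^ a = zeta ^ b \<longleftrightarrow> zeta ^ (b - a) = 1"
      by (simp add: zeta_def)
    then show ?thesis
      using mod_eq_dvd_iff_nat[OF that, of 6] by (auto simp: zeta_pow_eq_1_iff)
  qed
  show ?thesis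
    using *[of a b] *[of b a] by (cases "a \<le> b") auto
qed

lemma sum_powers_root_of_unity:
  fixes x :: "'a::field"
  assumes "x ^ N = 1"
  shows "(\<Sum>n<N. x ^ n) = (if x = 1 then of_nat N else 0)"
  using assms by (simp add: geometric_sum)

lemma mod_6_inj_on: "inj_on (\<lambda>m::nat. m mod 6) {1..6}"
proof (rule inj_onI)
  have mod_6: "m mod 6 = (if m = 6 then 0 else m)" if "m \<in> {1..6::nat}" for m
    using that by auto
  show "x = y" if "x \<in> {1..6}" "y \<in> {1..6}" "x mod 6 = y mod 6" for x y :: nat
    using that mod_6[OF that(1)] mod_6[OF that(2)] by (auto split: if_splits)
qed

lemma sum_mod_6_delta:
  assumes "m0 \<in> {1..6::nat}"
  shows "(\<Sum>m\<in>{1..6}. if m0 mod 6 = m mod 6 then f m else 0) = f m0"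
proof -
  have "m0 mod 6 = m mod 6 \<longleftrightarrow> m0 = m" if "m \<in> {1..6}" for m
    using inj_onD[OF mod_6_inj_on _ assms that] by auto
  then have "(\<Sum>m\<in>{1..6}. if m0 mod 6 = m mod 6 then f m else 0)
      = (\<Sum>m\<in>{1..6}. if m0 = m then f m else 0)"
    by (intro sum.cong) auto
  then show ?thesis
    using assms by simp
qed

lemma mat2_entries [simp]:
  "mat2 a b c e $ 1 $ 1 = a" "mat2 a b c e $ 1 $ 2 = b"
  "mat2 a b c e $ 2 $ 1 = c" "mat2 a b c e $ 2 $ 2 = e"
  by (simp_all add: mat2_def)

lemma mat2_eq_iff: "mat2 a b c e = mat2 a' b' c' e' \<longleftrightarrow> a = a' \<and> b = b' \<and> c = c' \<and> e = e'"
  by (auto simp: mat2_def vec_eq_iff forall_2)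

lemma mat2_mult:
  "mat2 a b c e ** mat2 a' b' c' e'
   = mat2 (a * a' + b * c') (a * b' + b * e') (c * a' + e * c') (c * b' + e * e')"
  by (simp add: mat2_def vec_eq_iff forall_2 matrix_matrix_mult_def sum_2)

lemma matrix_vector_mult_2:
  fixes g :: "'a::semiring_1^2^2"
  shows "(g *v u) $ 1 = g$1$1 * u$1 + g$1$2 * u$2" and "(g *v u) $ 2 = g$2$1 * u$1 + g$2$2 * u$2"
  by (simp_all add: matrix_vector_mult_def sum_2)

lemmas matrix_defs = Smat_def Tmat_def Tomega_def Lmat_def Umat_def Emat_def eps3_def omega_eq

lemma eps3_Smat: "eps3 ** Smat = Lmat ** Smat ** Smat ** Smat ** eps3"
  unfolding matrix_defs mat2_mult mat2_eq_iff using zeta_sq by algebra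

lemma eps3_Lmat: "eps3 ** Lmat = Lmat ** eps3"
  unfolding matrix_defs mat2_mult mat2_eq_iff by (simp add: mult_ac)

lemma eps3_Umat: "eps3 ** Umat = Lmat ** Lmat ** Smat ** (Umat ** Umat) ** Smat ** Lmat ** eps3"
  unfolding matrix_defs mat2_mult mat2_eq_iff using zeta_sq by algebra

lemma eps3_Umat_sq: "eps3 ** (Umat ** Umat) = Lmat ** Lmat ** Smat ** Umat ** Smat ** Lmat ** eps3"
  unfolding matrix_defs mat2_mult mat2_eq_iff using zeta_sq by algebra

lemma Emat_conj: "Emat = Lmat ** Umat ** Lmat ** Lmat"
  unfolding matrix_defs mat2_mult mat2_eq_iff using zeta_sq by algebra

lemma Emat_sq_conj: "Emat ** Emat = Lmat ** (Umat ** Umat) ** Lmat ** Lmat"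
  unfolding matrix_defs mat2_mult mat2_eq_iff using zeta_sq by algebra

section \<open>The homogeneous form of a polynomial\<close>

definition hcoord :: "complex \<Rightarrow> complex^2" where
  "hcoord z = vector [z, 1]"

definition homog_form :: "nat \<Rightarrow> (nat \<Rightarrow> nat \<Rightarrow> complex) \<Rightarrow> complex^2 \<Rightarrow> complex" where
  "homog_form k P u =
     (\<Sum>i\<le>k. \<Sum>j\<le>k. P i j * u$1 ^ i * u$2 ^ (k - i) * cnj (u$1) ^ j * cnj (u$2) ^ (k - j))"

lemma slash_eq_homog_form: "slash k g P z = homog_form k P (g *v hcoord z)"
  by (simp add: slash_def homog_form_def hcoord_def matrix_vector_mult_2 Let_def)

lemma evalP_eq_homog_form: "evalP k P z = homog_form k P (hcoord z)"
  by (simp add: evalP_def homog_form_def hcoord_def)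

lemma homog_form_scale: "homog_form k P (c *s u) = (c * cnj c) ^ k * homog_form k P u"
proof -
  have split: "(c * x) ^ i * (c * y) ^ (k - i) = c ^ k * (x ^ i * y ^ (k - i))"
    if "i \<le> k" for c x y :: complex and i
    using that by (simp add: power_mult_distrib mult_ac flip: power_add)
  have "homog_form k P (c *s u) = (\<Sum>i\<le>k. \<Sum>j\<le>k. P i j * ((c * u$1) ^ i * (c * u$2) ^ (k - i))
      * ((cnj c * cnj (u$1)) ^ j * (cnj c * cnj (u$2)) ^ (k - j)))"
    by (simp add: homog_form_def mult.assoc)
  also have "\<dots> = (\<Sum>i\<le>k. \<Sum>j\<le>k.
      (c * cnj c) ^ k * (P i j * u$1 ^ i * u$2 ^ (k - i) * cnj (u$1) ^ j * cnj (u$2) ^ (k - j)))"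
  proof (intro sum.cong refl)
    fix i j
    assume "i \<in> {..k}" "j \<in> {..k}"
    then have "i \<le> k" "j \<le> k"
      by auto
    then show "P i j * ((c * u$1) ^ i * (c * u$2) ^ (k - i))
        * ((cnj c * cnj (u$1)) ^ j * (cnj c * cnj (u$2)) ^ (k - j))
      = (c * cnj c) ^ k * (P i j * u$1 ^ i * u$2 ^ (k - i) * cnj (u$1) ^ j * cnj (u$2) ^ (k - j))"
      unfolding split[OF \<open>i \<le> k\<close>] split[OF \<open>j \<le> k\<close>] by (simp add: power_mult_distrib mult_ac)
  qed
  also have "\<dots> = (c * cnj c) ^ k * homog_form k P u"
    by (simp add: homog_form_def sum_distrib_left)
  finally show ?thesis .
qed

lemma continuous_on_homog_form [continuous_intros]:
  "continuous_on S f \<Longrightarrow> continuous_on S (\<lambda>u. homog_form k P (f u))"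
  unfolding homog_form_def by (intro continuous_intros)

lemma homog_form_lincomb:
  "homog_form k (\<lambda>i j. \<Sum>n\<in>A. c n * R n i j) u = (\<Sum>n\<in>A. c n * homog_form k (R n) u)"
proof -
  have "homog_form k (\<lambda>i j. \<Sum>n\<in>A. c n * R n i j) u = (\<Sum>i\<le>k. \<Sum>j\<le>k. \<Sum>n\<in>A.
      c n * (R n i j * u$1 ^ i * u$2 ^ (k - i) * cnj (u$1) ^ j * cnj (u$2) ^ (k - j)))"
    by (simp add: homog_form_def sum_distrib_right mult.assoc)
  also have "\<dots> = (\<Sum>n\<in>A. \<Sum>i\<le>k. \<Sum>j\<le>k.
      c n * (R n i j * u$1 ^ i * u$2 ^ (k - i) * cnj (u$1) ^ j * cnj (u$2) ^ (k - j)))"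
    by (simp add: sum.swap[where A = A])
  also have "\<dots> = (\<Sum>n\<in>A. c n * homog_form k (R n) u)"
    by (simp add: homog_form_def sum_distrib_left)
  finally show ?thesis .
qed

lemma bihomogeneous_eq_0_if_eq_0_on_chart:
  fixes G :: "complex^2 \<Rightarrow> complex"
  assumes hom: "\<And>c u. G (c *s u) = (c * cnj c) ^ k * G u"
    and cont: "continuous_on UNIV G"
    and chart: "\<And>z. G (hcoord z) = 0"
  shows "G u = 0"
proof -
  have finite_pt: "G v = 0" if "v$2 \<noteq> 0" for v
  proof -
    have "v = v$2 *s hcoord (v$1 / v$2)"
      using that by (simp add: vec_eq_iff forall_2 hcoord_def)
    then have "G v = (v$2 * cnj (v$2)) ^ k * G (hcoord (v$1 / v$2))"
      using hom by metis
    then show ?thesis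
      by (simp add: chart)
  qed
  show ?thesis
  proof (cases "u$2 = 0")
    case True
    define h where "h t = G (\<chi> i. if i = 2 then t else u$i)" for t
    have "continuous_on UNIV (\<lambda>t. \<chi> i. if i = 2 then t else u$i)"
    proof (rule continuous_on_vec_lambda)
      show "continuous_on UNIV (\<lambda>t. if i = 2 then t else u$i)" for i
        by (cases "i = 2") auto
    qed
    then have "continuous_on UNIV h"
      unfolding h_def by (rule continuous_on_compose2[OF cont]) auto
    then have "(h \<longlongrightarrow> h 0) (at 0)"
      by (simp add: continuous_on_eq_continuous_at isCont_def)
    moreover have "(h \<longlongrightarrow> 0) (at 0)"
      using True by (intro tendsto_eventually) (auto simp: eventually_at_filter h_def finite_pt)
    ultimately have "h 0 = 0"
      by (rule tendsto_unique[OF trivial_limit_at])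
    moreover have "(\<chi> i. if i = 2 then 0 else u$i) = u"
      using True by (auto simp: vec_eq_iff)
    ultimately show ?thesis
      by (simp add: h_def)
  qed (rule finite_pt)
qed

lemma homog_form_relation_extends:
  assumes "\<And>z. (\<Sum>(a, g)\<leftarrow>rel. a * homog_form k P (g *v hcoord z)) = 0"
  shows "(\<Sum>(a, g)\<leftarrow>rel. a * homog_form k P (g *v u)) = 0"
proof (rule bihomogeneous_eq_0_if_eq_0_on_chart[where k = k])
  show "(\<Sum>(a, g)\<leftarrow>rel. a * homog_form k P (g *v (c *s v)))
      = (c * cnj c) ^ k * (\<Sum>(a, g)\<leftarrow>rel. a * homog_form k P (g *v v))" for c v
    by (induction rel) (auto simp: vector_scalar_commute homog_form_scale algebra_simps)
  show "continuous_on UNIV (\<lambda>u. \<Sum>(a, g)\<leftarrow>rel. a * homog_form k P (g *v u))"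
    by (induction rel) (auto intro!: continuous_intros)
qed (fact assms)

definition period_relations :: "(complex^2 \<Rightarrow> complex) \<Rightarrow> bool" where
  "period_relations F \<longleftrightarrow>
     (\<forall>u. F (Smat *v u) = - F u) \<and>
     (\<forall>u. F (Lmat *v u) = F u) \<and>
     (\<forall>u. F u + F (Umat *v u) + F ((Umat ** Umat) *v u) = 0)"

lemma Wkk_iff_period_relations: "P \<in> Wkk k \<longleftrightarrow> P \<in> Vkk k \<and> period_relations (homog_form k P)"
proof
  assume "P \<in> Wkk k"
  then have V: "P \<in> Vkk k"
    and S: "\<And>z. slash k (mat 1) P z + slash k Smat P z = 0"
    and L: "\<And>z. slash k (mat 1) P z - slash k Lmat P z = 0"
    and U: "\<And>z. slash k (mat 1) P z + slash k Umat P z + slash k (Umat ** Umat) P z = 0"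
    unfolding Wkk_def by blast+
  have "(\<Sum>(a, g)\<leftarrow>[(1, Smat), (1, mat 1)]. a * homog_form k P (g *v u)) = 0" for u
    by (rule homog_form_relation_extends) (use S in \<open>simp add: slash_eq_homog_form add.commute\<close>)
  moreover have "(\<Sum>(a, g)\<leftarrow>[(1, mat 1), (-1, Lmat)]. a * homog_form k P (g *v u)) = 0" for u
    by (rule homog_form_relation_extends) (use L in \<open>simp add: slash_eq_homog_form\<close>)
  moreover have
    "(\<Sum>(a, g)\<leftarrow>[(1, mat 1), (1, Umat), (1, Umat ** Umat)]. a * homog_form k P (g *v u)) = 0" for u
    by (rule homog_form_relation_extends) (use U in \<open>simp add: slash_eq_homog_form add.assoc\<close>)
  ultimately show "P \<in> Vkk k \<and> period_relations (homog_form k P)"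
    using V by (simp add: period_relations_def eq_neg_iff_add_eq_0 add.assoc)
next
  assume "P \<in> Vkk k \<and> period_relations (homog_form k P)"
  then have V: "P \<in> Vkk k"
    and S: "\<And>u. homog_form k P (Smat *v u) = - homog_form k P u"
    and L: "\<And>u. homog_form k P (Lmat *v u) = homog_form k P u"
    and U: "\<And>u. homog_form k P u + homog_form k P (Umat *v u) + homog_form k P ((Umat ** Umat) *v u) = 0"
    by (auto simp: period_relations_def)
  have E: "homog_form k P u + homog_form k P (Emat *v u) + homog_form k P ((Emat ** Emat) *v u) = 0" for u
    using U[of "Lmat *v (Lmat *v u)"]
    unfolding Emat_sq_conj by (simp add: Emat_conj L flip: matrix_vector_mul_assoc)
  show "P \<in> Wkk k"
    using V S L U E by (simp add: Wkk_def slash_eq_homog_form)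
qed

lemma period_relations_eps3:
  assumes "period_relations F"
  shows "period_relations (\<lambda>u. F (eps3 *v u))"
proof -
  have S: "\<And>u. F (Smat *v u) = - F u" and L: "\<And>u. F (Lmat *v u) = F u"
    and U: "\<And>u. F u + F (Umat *v u) + F ((Umat ** Umat) *v u) = 0"
    using assms by (auto simp: period_relations_def)
  have "F (eps3 *v (Smat *v u)) = - F (eps3 *v u)" for u
    unfolding matrix_vector_mul_assoc eps3_Smat by (simp add: S L flip: matrix_vector_mul_assoc)
  moreover have "F (eps3 *v (Lmat *v u)) = F (eps3 *v u)" for u
    unfolding matrix_vector_mul_assoc eps3_Lmat by (simp add: L flip: matrix_vector_mul_assoc)
  moreover have "F (eps3 *v u) + F (eps3 *v (Umat *v u)) + F (eps3 *v ((Umat ** Umat) *v u)) = 0" for u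
  proof -
    define w where "w = Smat *v (Lmat *v (eps3 *v u))"
    have "F (eps3 *v u) = - F w"
      by (simp add: w_def S L)
    moreover have "F (eps3 *v (Umat *v u)) = - F ((Umat ** Umat) *v w)"
      unfolding matrix_vector_mul_assoc eps3_Umat by (simp add: w_def S L flip: matrix_vector_mul_assoc)
    moreover have "F (eps3 *v ((Umat ** Umat) *v u)) = - F (Umat *v w)"
      unfolding matrix_vector_mul_assoc eps3_Umat_sq by (simp add: w_def S L flip: matrix_vector_mul_assoc)
    ultimately show ?thesis
      using U[of w] by algebra
  qed
  ultimately show ?thesis
    by (simp add: period_relations_def)
qed

lemma period_relations_lincomb:
  assumes "\<And>n. n \<in> A \<Longrightarrow> period_relations (F n)"
  shows "period_relations (\<lambda>u. \<Sum>n\<in>A. c n * F n u)"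
proof -
  have S: "F n (Smat *v u) = - F n u" and L: "F n (Lmat *v u) = F n u"
    and U: "F n u + F n (Umat *v u) + F n ((Umat ** Umat) *v u) = 0" if "n \<in> A" for n u
    using assms[OF that] by (auto simp: period_relations_def)
  have "(\<Sum>n\<in>A. c n * F n u) + (\<Sum>n\<in>A. c n * F n (Umat *v u)) + (\<Sum>n\<in>A. c n * F n ((Umat ** Umat) *v u))
      = (\<Sum>n\<in>A. c n * (F n u + F n (Umat *v u) + F n ((Umat ** Umat) *v u)))" for u
    by (simp add: sum.distrib distrib_left)
  then show ?thesis
    by (simp add: period_relations_def S L U sum_negf)
qed

lemma Wkk_lincomb:
  assumes "\<And>n. n \<in> A \<Longrightarrow> R n \<in> Wkk k"
  shows "(\<lambda>i j. \<Sum>n\<in>A. c n * R n i j) \<in> Wkk k"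
proof -
  have "homog_form k (\<lambda>i j. \<Sum>n\<in>A. c n * R n i j) = (\<lambda>u. \<Sum>n\<in>A. c n * homog_form k (R n) u)"
    by (rule ext) (rule homog_form_lincomb)
  moreover have "(\<lambda>i j. \<Sum>n\<in>A. c n * R n i j) \<in> Vkk k"
    using assms by (simp add: Wkk_def Vkk_def)
  ultimately show ?thesis
    using assms by (simp add: Wkk_iff_period_relations period_relations_lincomb)
qed

section \<open>The action of eps3\<close>

(* The coefficient array of P|eps3^n: the monomial z^i zbar^j picks up zeta^(n(i-j)), and
   i + 5j replaces i - j to avoid truncated subtraction. *)
definition twist :: "nat \<Rightarrow> (nat \<Rightarrow> nat \<Rightarrow> complex) \<Rightarrow> nat \<Rightarrow> nat \<Rightarrow> complex" where
  "twist n P i j = zeta ^ (n * (i + 5 * j)) * P i j"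

lemma twist_0 [simp]: "twist 0 P = P"
  by (simp add: twist_def fun_eq_iff)

lemma twist_twist: "twist m (twist n P) = twist (m + n) P"
  by (simp add: twist_def fun_eq_iff power_add add_mult_distrib)

lemma twist_6_mult: "twist (6 * n) P = P"
  by (simp add: fun_eq_iff twist_def mult.assoc zeta_pow_6_mult)

lemma homog_form_twist: "homog_form k (twist 1 P) u = homog_form k P (eps3 *v u)"
  by (simp add: homog_form_def twist_def eps3_def matrix_vector_mult_2 cnj_zeta_pow
      power_mult_distrib power_add mult_ac)

lemma slash_eps3: "slash k eps3 P = evalP k (twist 1 P)"
  unfolding fun_eq_iff slash_eq_homog_form evalP_eq_homog_form homog_form_twist by simp

lemma evalP_twist: "evalP k (twist n P) z = evalP k P (zeta ^ n * z)"
proof -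
  have "zeta ^ (n * (i + 5 * j)) = (zeta ^ n) ^ i * cnj (zeta ^ n) ^ j" for i j
    by (simp add: cnj_zeta_pow algebra_simps flip: power_mult power_add)
  then show ?thesis
    by (simp add: evalP_def twist_def power_mult_distrib mult_ac)
qed

lemma twist_Wkk: "P \<in> Wkk k \<Longrightarrow> twist n P \<in> Wkk k"
proof (induction n)
  case (Suc n)
  have "homog_form k (twist 1 (twist n P)) = (\<lambda>u. homog_form k (twist n P) (eps3 *v u))"
    by (rule ext) (rule homog_form_twist)
  moreover have "twist 1 (twist n P) \<in> Vkk k"
    using Suc by (simp add: Wkk_def Vkk_def twist_def)
  ultimately have "twist 1 (twist n P) \<in> Wkk k"
    using Suc by (simp add: Wkk_iff_period_relations period_relations_eps3)
  then show ?case
    by (simp add: twist_twist)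
qed simp

lemma twist_image_Wkk: "twist n ` Wkk k = Wkk k"
proof
  show "twist n ` Wkk k \<subseteq> Wkk k"
    using twist_Wkk by blast
  show "Wkk k \<subseteq> twist n ` Wkk k"
  proof
    fix P
    assume "P \<in> Wkk k"
    moreover have "P = twist n (twist (5 * n) P)"
      using twist_6_mult[of n P] by (simp add: twist_twist)
    ultimately show "P \<in> twist n ` Wkk k"
      using twist_Wkk by blast
  qed
qed

lemma slash_eps3_image_Wkk: "(\<lambda>P. slash k eps3 P) ` Wkk k = (\<lambda>P. evalP k P) ` Wkk k"
proof -
  have "(\<lambda>P. slash k eps3 P) = evalP k \<circ> twist 1"
    by (simp add: fun_eq_iff slash_eps3)
  then show ?thesis
    by (simp only: image_comp[symmetric] twist_image_Wkk)
qed

section \<open>Eigenspace decomposition\<close>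

definition eigen_part :: "nat \<Rightarrow> (nat \<Rightarrow> nat \<Rightarrow> complex) \<Rightarrow> nat \<Rightarrow> nat \<Rightarrow> complex" where
  "eigen_part m P i j = (if (i + 5 * j) mod 6 = m mod 6 then P i j else 0)"

lemma eigen_part_eq_average:
  "eigen_part m P = (\<lambda>i j. \<Sum>n<6. zeta ^ (5 * m * n) / 6 * twist n P i j)"
proof (intro ext)
  fix i j
  define x where "x = zeta ^ (5 * m + i + 5 * j)"
  have "(\<Sum>n<6. zeta ^ (5 * m * n) / 6 * twist n P i j)
      = P i j / 6 * (\<Sum>n<6. zeta ^ (n * (5 * m + i + 5 * j)))"
    by (simp add: twist_def sum_distrib_left algebra_simps flip: power_add)
  also have "\<dots> = P i j / 6 * (\<Sum>n<6. x ^ n)"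
    unfolding x_def by (intro arg_cong[where f = "(*) _"] sum.cong refl) (metis power_mult mult.commute)
  finally have avg: "(\<Sum>n<6. zeta ^ (5 * m * n) / 6 * twist n P i j) = P i j / 6 * (\<Sum>n<6. x ^ n)" .
  have "x ^ 6 = 1"
    unfolding x_def by (metis power_mult mult.commute zeta_pow_6_mult)
  moreover have "x * zeta ^ m = zeta ^ (6 * m) * zeta ^ (i + 5 * j)"
    by (simp add: x_def algebra_simps flip: power_add)
  then have "x * zeta ^ m = zeta ^ (i + 5 * j)"
    by (simp add: zeta_pow_6_mult)
  then have "x = 1 \<longleftrightarrow> (i + 5 * j) mod 6 = m mod 6"
    by (auto simp: zeta_def simp flip: zeta_pow_eq_iff)
  ultimately show "eigen_part m P i j = (\<Sum>n<6. zeta ^ (5 * m * n) / 6 * twist n P i j)"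
    unfolding avg eigen_part_def by (simp add: sum_powers_root_of_unity)
qed

lemma twist_eigen_part: "twist 1 (eigen_part m P) = (\<lambda>i j. zeta ^ m * eigen_part m P i j)"
  by (auto simp: fun_eq_iff twist_def eigen_part_def zeta_pow_eq_iff)

lemma eigen_part_Weig:
  assumes "P \<in> Wkk k"
  shows "eigen_part m P \<in> Weig k (zeta ^ m)"
proof -
  have "eigen_part m P \<in> Wkk k"
    unfolding eigen_part_eq_average using assms by (intro Wkk_lincomb twist_Wkk)
  moreover have "evalP k (eigen_part m P) (zeta * z) = zeta ^ m * evalP k (eigen_part m P) z" for z
    using evalP_twist[of k 1 "eigen_part m P" z] unfolding twist_eigen_part
    by (simp add: evalP_def sum_distrib_left mult.assoc)
  ultimately show ?thesis
    by (simp add: Weig_def)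
qed

lemma sum_eigen_parts: "(\<lambda>i j. \<Sum>m\<in>{1..6}. eigen_part m P i j) = P"
proof (intro ext)
  fix i j :: nat
  define m0 where "m0 = (if (i + 5 * j) mod 6 = 0 then 6 else (i + 5 * j) mod 6)"
  have "m0 \<in> {1..6}" and "m0 mod 6 = (i + 5 * j) mod 6"
    by (auto simp: m0_def)
  then show "(\<Sum>m\<in>{1..6}. eigen_part m P i j) = P i j"
    using sum_mod_6_delta[of m0 "\<lambda>_. P i j"] by (simp add: eigen_part_def)
qed

lemma Weig_coeff_eigen:
  assumes "Q \<in> Weig k lam"
  shows "zeta ^ (i + 5 * j) * Q i j = lam * Q i j"
proof (cases "i \<le> k \<and> j \<le> k")
  case True
  define c where "c i j = (zeta ^ (i + 5 * j) - lam) * Q i j" for i j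
  have c_zero: "evalP k c z = 0" for z
  proof -
    have "evalP k c z = evalP k (twist 1 Q) z - lam * evalP k Q z"
      by (simp add: c_def evalP_def twist_def sum_subtractf sum_distrib_left algebra_simps)
    also have "\<dots> = 0"
      using assms by (simp add: Weig_def evalP_twist)
    finally show ?thesis .
  qed
  have "c i j = 0"
    using evalP_eq_0_imp_coeff_eq_0[OF c_zero] True by blast
  then show ?thesis
    by (simp add: c_def algebra_simps)
next
  case False
  have "Q \<in> Vkk k"
    using assms by (simp add: Weig_def Wkk_def)
  then have "Q i j = 0"
    using False by (auto simp: Vkk_def)
  then show ?thesis
    by simp
qed

lemma eigen_part_of_Weig:
  assumes "Q \<in> Weig k (zeta ^ m)"
  shows "eigen_part m' Q = (if m' mod 6 = m mod 6 then Q else (\<lambda>i j. 0))"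
proof (intro ext)
  fix i j
  have "(i + 5 * j) mod 6 = m mod 6" if "Q i j \<noteq> 0"
    using Weig_coeff_eigen[OF assms, of i j] that by (simp flip: zeta_pow_eq_iff)
  then show "eigen_part m' Q i j = (if m' mod 6 = m mod 6 then Q else (\<lambda>i j. 0)) i j"
    by (cases "Q i j = 0") (auto simp: eigen_part_def)
qed

lemma eigen_part_sum_of_Weig:
  assumes "\<forall>m\<in>{1..6}. Q m \<in> Weig k (zeta ^ m)" and "m0 \<in> {1..6}"
  shows "eigen_part m0 (\<lambda>i j. \<Sum>m\<in>{1..6}. Q m i j) = Q m0"
proof (intro ext)
  fix i j
  have "eigen_part m0 (\<lambda>i j. \<Sum>m\<in>{1..6}. Q m i j) i j = (\<Sum>m\<in>{1..6}. eigen_part m0 (Q m) i j)"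
    by (simp add: eigen_part_def)
  also have "\<dots> = (\<Sum>m\<in>{1..6}. if m0 mod 6 = m mod 6 then Q m i j else 0)"
  proof (rule sum.cong[OF refl])
    fix m :: nat
    assume "m \<in> {1..6}"
    then have "Q m \<in> Weig k (zeta ^ m)"
      using assms(1) by blast
    then show "eigen_part m0 (Q m) i j = (if m0 mod 6 = m mod 6 then Q m i j else 0)"
      by (simp add: eigen_part_of_Weig)
  qed
  also have "\<dots> = Q m0 i j"
    using assms(2) by (rule sum_mod_6_delta)
  finally show "eigen_part m0 (\<lambda>i j. \<Sum>m\<in>{1..6}. Q m i j) i j = Q m0 i j" .
qed

lemma Wkk_eq_sums_of_Weig:
  "Wkk k = {(\<lambda>i j. \<Sum>m\<in>{1..6}. Q m i j) | Q. \<forall>m\<in>{1..6}. Q m \<in> Weig k (zeta ^ m)}"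
proof (intro equalityI subsetI)
  fix P
  assume "P \<in> Wkk k"
  then show "P \<in> {(\<lambda>i j. \<Sum>m\<in>{1..6}. Q m i j) | Q. \<forall>m\<in>{1..6}. Q m \<in> Weig k (zeta ^ m)}"
    using sum_eigen_parts[of P] eigen_part_Weig[OF \<open>P \<in> Wkk k\<close>]
    by (intro CollectI exI[of _ "\<lambda>m. eigen_part m P"]) auto
next
  fix P
  assume "P \<in> {(\<lambda>i j. \<Sum>m\<in>{1..6}. Q m i j) | Q. \<forall>m\<in>{1..6}. Q m \<in> Weig k (zeta ^ m)}"
  then obtain Q :: "nat \<Rightarrow> nat \<Rightarrow> nat \<Rightarrow> complex"
    where "\<forall>m\<in>{1..6}. Q m \<in> Wkk k" and "P = (\<lambda>i j. \<Sum>m\<in>{1..6}. Q m i j)"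
    by (auto simp: Weig_def)
  then show "P \<in> Wkk k"
    using Wkk_lincomb[of "{1..6}" Q k "\<lambda>_. 1"] by simp
qed

lemma sum_of_Weig_eq_0:
  assumes "\<forall>m\<in>{1..6}. Q m \<in> Weig k (zeta ^ m)"
    and "(\<lambda>i j. \<Sum>m\<in>{1..6}. Q m i j) = (\<lambda>i j. 0)"
    and "m0 \<in> {1..6}"
  shows "Q m0 = (\<lambda>i j. 0)"
proof -
  have "Q m0 = eigen_part m0 (\<lambda>i j. 0)"
    using eigen_part_sum_of_Weig[OF assms(1,3)] assms(2) by simp
  then show ?thesis
    by (simp add: eigen_part_def fun_eq_iff)
qed

theorem proposition5p6:
  fixes k :: nat
  assumes "odd k" and "1 \<le> k"
  shows "(\<lambda>P. slash k eps3 P) ` Wkk k = (\<lambda>P. evalP k P) ` Wkk k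
     \<and> Wkk k = {(\<lambda>i j. \<Sum>m\<in>{1..6}. Q m i j) | Q. \<forall>m\<in>{1..6}. Q m \<in> Weig k (zeta ^ m)}
     \<and> (\<forall>Q. (\<forall>m\<in>{1..6}. Q m \<in> Weig k (zeta ^ m)) \<and> (\<lambda>i j. \<Sum>m\<in>{1..6}. Q m i j) = (\<lambda>i j. 0)
            \<longrightarrow> (\<forall>m\<in>{1..6}. Q m = (\<lambda>i j. 0)))"
  using slash_eps3_image_Wkk Wkk_eq_sums_of_Weig sum_of_Weig_eq_0 by blast

end
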